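(* For any constant $\alpha\ge1$, the class of parity functions is exactly learnable under $\alpha$-log-Lipschitz distributions.
   Context: Parity functions on $\{0,1\}^n$ are $f_I(x)=\left(\sum_{i\in I}x_i\right)\bmod 2$ for $I\subseteq[n]$. A distribution $D$ on $\{0,1\}^n$ is $\alpha$-log-Lipschitz if $|\log D(x)-\log D(x')|\le\log\alpha$ whenever $x,x'$ differ in exactly one bit. Exact learnability under a class of distributions means: there is an algorithm which, for every $n$, every target parity $c$, every distribution $D$ in the class and every $\delta>0$, given a number of i.i.d. examples from $D$ labelled by $c$ that is polynomial in $n$ and $1/\delta$, outputs with probability at least $1-\delta$ a hypothesis $h$ with $h(x)=c(x)$ for all $x\in\{0,1\}^n$. *)

theory Defs
  imports "HOL-Probability.Probability"
begin

definition cube :: "nat \<Rightarrow> bool list set" where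
  "cube n = {x. length x = n}"

definition parity :: "nat set \<Rightarrow> bool list \<Rightarrow> bool" where
  "parity I x = odd (card {i \<in> I. i < length x \<and> x ! i})"

definition differ_in_one_bit :: "bool list \<Rightarrow> bool list \<Rightarrow> bool" where
  "differ_in_one_bit x y \<longleftrightarrow> length x = length y \<and>
     card {i. i < length x \<and> x ! i \<noteq> y ! i} = 1"

text \<open>alpha-log-Lipschitz distribution on {0,1}^n (log of a probability must be defined,
  so D has full support on the cube).\<close>
definition log_lipschitz :: "real \<Rightarrow> nat \<Rightarrow> bool list pmf \<Rightarrow> bool" where
  "log_lipschitz \<alpha> n D \<longleftrightarrow> set_pmf D \<subseteq> cube n \<and> (\<forall>x\<in>cube n. pmf D x > 0) \<and>
     (\<forall>x\<in>cube n. \<forall>y\<in>cube n. differ_in_one_bit x y \<longrightarrow>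
        \<bar>ln (pmf D x) - ln (pmf D y)\<bar> \<le> ln \<alpha>)"

fun iid_samples :: "'a pmf \<Rightarrow> nat \<Rightarrow> 'a list pmf" where
  "iid_samples D 0 = return_pmf []"
| "iid_samples D (Suc m) = bind_pmf D (\<lambda>x. map_pmf (\<lambda>xs. x # xs) (iid_samples D m))"

definition labelled_samples :: "'a pmf \<Rightarrow> ('a \<Rightarrow> bool) \<Rightarrow> nat \<Rightarrow> ('a \<times> bool) list pmf" where
  "labelled_samples D c m = map_pmf (map (\<lambda>x. (x, c x))) (iid_samples D m)"

definition poly_sample_size :: "(nat \<Rightarrow> real \<Rightarrow> nat) \<Rightarrow> bool" where
  "poly_sample_size m \<longleftrightarrow> (\<exists>C k. \<forall>n \<delta>. \<delta> > 0 \<longrightarrow>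
      real (m n \<delta>) \<le> C * (real n + 1 / \<delta> + 1) ^ k)"

end

theory Submission
  imports Defs
begin

text \<open>
  Two distinct parities I, J on n bits differ at some coordinate i, so flipping bit i maps
  the set where they agree injectively into the set where they disagree. Since an
  \<alpha>-log-Lipschitz distribution changes by at most a factor \<alpha> under a bit flip, the
  agreement set has probability at most \<alpha>/(1+\<alpha>). A learner that outputs any parity
  consistent with M samples therefore fails only if one of the at most 2^n wrong parities
  survives all samples, which has probability at most 2^n (\<alpha>/(1+\<alpha>))^M; this is below \<delta>
  once M is of order (n + 1/\<delta>) / ln (1 + 1/\<alpha>).
\<close>

lemma prob_iid_samples_subset:
  "measure_pmf.prob (iid_samples D m) {xs. set xs \<subseteq> A} = measure_pmf.prob D A ^ m"
proof (induction m)
  case 0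
  then show ?case by simp
next
  case (Suc m)
  let ?Q = "iid_samples D m"
  let ?E = "{xs. set xs \<subseteq> A}"
  have Cons_preimage: "\<And>x. Cons x -` ?E = (if x \<in> A then ?E else {})" by auto
  have "emeasure (iid_samples D (Suc m)) ?E = (\<integral>\<^sup>+x. emeasure ?Q (Cons x -` ?E) \<partial>D)"
    by simp
  also have "\<dots> = (\<integral>\<^sup>+x. emeasure ?Q ?E * indicator A x \<partial>D)"
    by (intro nn_integral_cong) (simp add: Cons_preimage indicator_def)
  also have "\<dots> = emeasure ?Q ?E * emeasure D A"
    by (simp add: nn_integral_cmult)
  also have "\<dots> = ennreal (measure_pmf.prob D A ^ Suc m)"
    by (simp add: measure_pmf.emeasure_eq_measure Suc ennreal_mult' mult.commute)
  finally show ?case by (simp add: measure_pmf.emeasure_eq_measure)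
qed

lemma prob_le_if_injection_into_complement:
  fixes D :: "'a pmf" and \<alpha> :: real
  assumes "finite S" "set_pmf D \<subseteq> S" "H \<subseteq> S" "\<alpha> \<ge> 0"
    and inj: "inj_on f H" and f_H: "f ` H \<subseteq> S - H"
    and dominated: "\<And>x. x \<in> H \<Longrightarrow> pmf D x \<le> \<alpha> * pmf D (f x)"
  shows "measure_pmf.prob D H \<le> \<alpha> / (1 + \<alpha>)"
proof -
  have fin: "finite H" "finite (S - H)" using assms(1,3) finite_subset by auto
  have "measure_pmf.prob D H = sum (pmf D) H"
    using fin by (simp add: measure_measure_pmf_finite)
  also have "\<dots> \<le> (\<Sum>x\<in>H. \<alpha> * pmf D (f x))"
    by (intro sum_mono dominated)
  also have "\<dots> = \<alpha> * sum (pmf D) (f ` H)"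
    by (simp add: sum_distrib_left sum.reindex[OF inj])
  also have "\<dots> \<le> \<alpha> * sum (pmf D) (S - H)"
    using assms(4) f_H fin by (intro mult_left_mono sum_mono2) auto
  also have "\<dots> = \<alpha> * measure_pmf.prob D (S - H)"
    using fin by (simp add: measure_measure_pmf_finite)
  also have "\<dots> = \<alpha> * (1 - measure_pmf.prob D H)"
  proof -
    have "measure_pmf.prob D S = 1"
      using assms(2) by (subst measure_pmf.prob_eq_1) (auto simp: AE_measure_pmf_iff)
    then show ?thesis
      using assms(3) by (simp add: measure_pmf.finite_measure_Diff)
  qed
  finally show ?thesis
    using assms(4) by (simp add: le_divide_eq algebra_simps)
qed

lemma finite_cube: "finite (cube n)"
  using finite_lists_length_eq[of "UNIV :: bool set" n] by (simp add: cube_def)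

definition flip_bit :: "nat \<Rightarrow> bool list \<Rightarrow> bool list" where
  "flip_bit i x = x[i := \<not> x ! i]"

lemma flip_bit_in_cube: "x \<in> cube n \<Longrightarrow> flip_bit i x \<in> cube n"
  by (simp add: cube_def flip_bit_def)

lemma flip_bit_flip_bit: "flip_bit i (flip_bit i x) = x"
  by (cases "i < length x") (simp_all add: flip_bit_def list_update_beyond not_less)

lemma differ_in_one_bit_flip_bit:
  assumes "i < length x"
  shows "differ_in_one_bit x (flip_bit i x)"
proof -
  have "{j. j < length x \<and> x ! j \<noteq> flip_bit i x ! j} = {i}"
    using assms by (auto simp: flip_bit_def nth_list_update)
  then show ?thesis
    by (simp add: differ_in_one_bit_def flip_bit_def)
qed

lemma parity_flip_bit:
  assumes "i < length x"
  shows "parity K (flip_bit i x) = (if i \<in> K then \<not> parity K x else parity K x)"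
proof -
  let ?S = "{j\<in>K. j < length x \<and> x ! j}"
  let ?S' = "{j\<in>K. j < length x \<and> flip_bit i x ! j}"
  have fin: "finite ?S" "finite ?S'"
    by (auto intro: finite_subset[of _ "{..<length x}"])
  consider "i \<notin> K" | "i \<in> K" "x ! i" | "i \<in> K" "\<not> x ! i" by blast
  then show ?thesis
  proof cases
    case 1
    then have "?S' = ?S" using assms by (auto simp: flip_bit_def nth_list_update)
    then show ?thesis using 1 by (simp add: parity_def flip_bit_def)
  next
    case 2
    then have "?S = insert i ?S'" "i \<notin> ?S'" using assms by (auto simp: flip_bit_def nth_list_update)
    then have "card ?S = Suc (card ?S')" using fin by simp
    then show ?thesis using 2 by (simp add: parity_def flip_bit_def)
  next
    case 3
    then have "?S' = insert i ?S" "i \<notin> ?S" using assms by (auto simp: flip_bit_def nth_list_update)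
    then have "card ?S' = Suc (card ?S)" using fin by simp
    then show ?thesis using 3 by (simp add: parity_def flip_bit_def)
  qed
qed

lemma log_lipschitz_pmf_le_flip_bit:
  assumes "\<alpha> > 0" and D: "log_lipschitz \<alpha> n D" and x: "x \<in> cube n" and "i < n"
  shows "pmf D x \<le> \<alpha> * pmf D (flip_bit i x)"
proof -
  have fx: "flip_bit i x \<in> cube n" using x by (rule flip_bit_in_cube)
  have pos: "pmf D x > 0" "pmf D (flip_bit i x) > 0"
    using D x fx unfolding log_lipschitz_def by blast+
  have "differ_in_one_bit x (flip_bit i x)"
    using x \<open>i < n\<close> by (intro differ_in_one_bit_flip_bit) (simp add: cube_def)
  then have "\<bar>ln (pmf D x) - ln (pmf D (flip_bit i x))\<bar> \<le> ln \<alpha>"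
    using D x fx unfolding log_lipschitz_def by blast
  then have "ln (pmf D x) \<le> ln (\<alpha> * pmf D (flip_bit i x))"
    using pos \<open>\<alpha> > 0\<close> by (simp add: ln_mult)
  then show ?thesis
    using pos \<open>\<alpha> > 0\<close> by simp
qed

lemma log_lipschitz_prob_parities_agree:
  assumes "\<alpha> > 0" and D: "log_lipschitz \<alpha> n D"
    and "J \<subseteq> {..<n}" "I \<subseteq> {..<n}" "J \<noteq> I"
  shows "measure_pmf.prob D {x. parity J x = parity I x} \<le> \<alpha> / (1 + \<alpha>)"
proof -
  obtain i where i_diff: "(i \<in> J) \<noteq> (i \<in> I)" using \<open>J \<noteq> I\<close> by blast
  then have "i < n" using assms(3,4) by auto
  define H where "H = {x \<in> cube n. parity J x = parity I x}"
  have supp: "set_pmf D \<subseteq> cube n" using D by (simp add: log_lipschitz_def)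
  have "flip_bit i ` H \<subseteq> cube n - H"
  proof
    fix y assume "y \<in> flip_bit i ` H"
    then obtain x where x: "x \<in> H" "y = flip_bit i x" by blast
    then have "x \<in> cube n" "i < length x" using \<open>i < n\<close> by (auto simp: H_def cube_def)
    then show "y \<in> cube n - H"
      using x i_diff by (auto simp: H_def parity_flip_bit flip_bit_in_cube)
  qed
  moreover have "inj_on (flip_bit i) H" by (metis flip_bit_flip_bit inj_on_inverseI)
  ultimately have "measure_pmf.prob D H \<le> \<alpha> / (1 + \<alpha>)"
    using finite_cube supp \<open>\<alpha> > 0\<close> log_lipschitz_pmf_le_flip_bit[OF \<open>\<alpha> > 0\<close> D _ \<open>i < n\<close>]
    by (intro prob_le_if_injection_into_complement[where S = "cube n"]) (auto simp: H_def)
  moreover have "measure_pmf.prob D {x. parity J x = parity I x} = measure_pmf.prob D H"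
    using supp by (intro measure_eq_AE) (auto simp: AE_measure_pmf_iff H_def)
  ultimately show ?thesis by simp
qed

definition consistent_hypothesis :: "('i \<Rightarrow> 'a \<Rightarrow> bool) \<Rightarrow> 'i set \<Rightarrow> ('a \<times> bool) list \<Rightarrow> 'i" where
  "consistent_hypothesis h K S = (SOME j. j \<in> K \<and> (\<forall>(x, b)\<in>set S. h j x = b))"

lemma consistent_hypothesis_consistent:
  fixes h :: "'i \<Rightarrow> 'a \<Rightarrow> bool" and xs :: "'a list"
  assumes "i \<in> K"
  defines "j \<equiv> consistent_hypothesis h K (map (\<lambda>x. (x, h i x)) xs)"
  shows "j \<in> K" "\<forall>x\<in>set xs. h j x = h i x"
proof -
  have "i \<in> K \<and> (\<forall>(x, b)\<in>set (map (\<lambda>x. (x, h i x)) xs). h i x = b)"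
    using assms by auto
  then have "j \<in> K \<and> (\<forall>(x, b)\<in>set (map (\<lambda>x. (x, h i x)) xs). h j x = b)"
    unfolding j_def consistent_hypothesis_def by (rule someI)
  then show "j \<in> K" "\<forall>x\<in>set xs. h j x = h i x" by auto
qed

lemma prob_consistent_hypothesis_wrong:
  fixes h :: "'i \<Rightarrow> 'a \<Rightarrow> bool"
  assumes "finite K" "i \<in> K"
  shows "measure_pmf.prob (iid_samples D M)
           {xs. consistent_hypothesis h K (map (\<lambda>x. (x, h i x)) xs) \<noteq> i}
         \<le> (\<Sum>j\<in>K - {i}. measure_pmf.prob D {x. h j x = h i x} ^ M)"
proof -
  let ?P = "iid_samples D M"
  let ?E = "\<lambda>j. {xs. set xs \<subseteq> {x. h j x = h i x}}"
  have "{xs. consistent_hypothesis h K (map (\<lambda>x. (x, h i x)) xs) \<noteq> i} \<subseteq> (\<Union>j\<in>K - {i}. ?E j)"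
    using consistent_hypothesis_consistent[OF \<open>i \<in> K\<close>, where h = h] by blast
  then have "measure_pmf.prob ?P {xs. consistent_hypothesis h K (map (\<lambda>x. (x, h i x)) xs) \<noteq> i}
      \<le> measure_pmf.prob ?P (\<Union>j\<in>K - {i}. ?E j)"
    by (intro measure_pmf.finite_measure_mono) auto
  also have "\<dots> \<le> (\<Sum>j\<in>K - {i}. measure_pmf.prob ?P (?E j))"
    using \<open>finite K\<close> by (intro measure_pmf.finite_measure_subadditive_finite) auto
  also have "\<dots> = (\<Sum>j\<in>K - {i}. measure_pmf.prob D {x. h j x = h i x} ^ M)"
    by (simp only: prob_iid_samples_subset)
  finally show ?thesis .
qed

lemma prob_consistent_learner_exact_ge:
  fixes h :: "'i \<Rightarrow> 'a \<Rightarrow> bool"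
  shows "measure_pmf.prob (map_pmf (\<lambda>S. h (consistent_hypothesis h K S)) (labelled_samples D (h i) M))
           {g. \<forall>x\<in>A. g x = h i x}
         \<ge> 1 - measure_pmf.prob (iid_samples D M)
                {xs. consistent_hypothesis h K (map (\<lambda>x. (x, h i x)) xs) \<noteq> i}"
  (is "_ \<ge> 1 - measure_pmf.prob ?P ?wrong")
proof -
  have "1 - measure_pmf.prob ?P ?wrong = measure_pmf.prob ?P (UNIV - ?wrong)"
    using measure_pmf.prob_compl[of ?wrong ?P] by simp
  also have "\<dots> \<le> measure_pmf.prob ?P
      {xs. h (consistent_hypothesis h K (map (\<lambda>x. (x, h i x)) xs)) \<in> {g. \<forall>x\<in>A. g x = h i x}}"
    by (intro measure_pmf.finite_measure_mono) auto
  also have "\<dots> = measure_pmf.prob (map_pmf (\<lambda>S. h (consistent_hypothesis h K S))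
      (labelled_samples D (h i) M)) {g. \<forall>x\<in>A. g x = h i x}"
    by (simp add: labelled_samples_def map_pmf_comp vimage_def)
  finally show ?thesis .
qed

lemma log_lipschitz_prob_consistent_parity_wrong:
  assumes "\<alpha> > 0" and D: "log_lipschitz \<alpha> n D" and I: "I \<subseteq> {..<n}"
  shows "measure_pmf.prob (iid_samples D M)
           {xs. consistent_hypothesis parity (Pow {..<n}) (map (\<lambda>x. (x, parity I x)) xs) \<noteq> I}
         \<le> 2 ^ n * (\<alpha> / (1 + \<alpha>)) ^ M"
proof -
  let ?q = "\<alpha> / (1 + \<alpha>)"
  have "measure_pmf.prob (iid_samples D M)
           {xs. consistent_hypothesis parity (Pow {..<n}) (map (\<lambda>x. (x, parity I x)) xs) \<noteq> I}
      \<le> (\<Sum>J\<in>Pow {..<n} - {I}. measure_pmf.prob D {x. parity J x = parity I x} ^ M)"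
    using I by (intro prob_consistent_hypothesis_wrong) auto
  also have "\<dots> \<le> (\<Sum>J\<in>Pow {..<n} - {I}. ?q ^ M)"
    using log_lipschitz_prob_parities_agree[OF \<open>\<alpha> > 0\<close> D _ I]
    by (intro sum_mono power_mono) auto
  also have "\<dots> \<le> 2 ^ n * ?q ^ M"
  proof -
    have "card (Pow {..<n} - {I}) \<le> 2 ^ n"
      using card_Diff1_le[of "Pow {..<n}" I] by (simp add: card_Pow)
    then have "real (card (Pow {..<n} - {I})) \<le> 2 ^ n"
      by (metis of_nat_le_iff of_nat_numeral of_nat_power)
    then show ?thesis
      using \<open>\<alpha> > 0\<close> by (simp add: mult_right_mono)
  qed
  finally show ?thesis .
qed

lemma two_power_mul_power_le:
  fixes q \<delta> :: real
  assumes "0 < q" "q < 1" "\<delta> > 0"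
    and M: "real M \<ge> (real n + 1 / \<delta>) / ln (1 / q)"
  shows "2 ^ n * q ^ M \<le> \<delta>"
proof -
  have "ln (1 / q) > 0" using assms(1,2) by simp
  then have "real n + 1 / \<delta> \<le> real M * ln (1 / q)"
    using M by (simp only: pos_divide_le_eq)
  then have "real n + 1 / \<delta> \<le> - (real M * ln q)"
    using assms(1) by (simp add: ln_div)
  then have "q ^ M \<le> exp (- real n) * exp (- (1 / \<delta>))"
    using assms(1) by (simp add: powr_def flip: powr_realpow exp_add)
  moreover have "(2::real) ^ n \<le> exp 1 ^ n"
    using exp_ge_add_one_self[of 1] by (intro power_mono) auto
  then have "(2::real) ^ n \<le> exp (real n)"
    by (simp add: exp_of_nat_mult[symmetric])
  ultimately have "2 ^ n * q ^ M \<le> exp (real n) * (exp (- real n) * exp (- (1 / \<delta>)))"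
    using assms(1) by (intro mult_mono) auto
  also have "\<dots> = 1 / exp (1 / \<delta>)"
    by (simp add: exp_minus field_simps)
  also have "\<dots> \<le> \<delta>"
    using exp_ge_add_one_self[of "1 / \<delta>"] \<open>\<delta> > 0\<close> by (simp add: divide_le_eq field_simps)
  finally show ?thesis .
qed

lemma poly_sample_size_ceiling:
  assumes "r > 0"
  shows "poly_sample_size (\<lambda>n \<delta>. nat \<lceil>(real n + 1 / \<delta>) / r\<rceil>)"
  unfolding poly_sample_size_def
proof (intro exI allI impI)
  fix n :: nat and \<delta> :: real
  assume "\<delta> > 0"
  then have "real (nat \<lceil>(real n + 1 / \<delta>) / r\<rceil>) \<le> (real n + 1 / \<delta>) / r + 1"
    using \<open>r > 0\<close> by (simp add: of_nat_nat)
  also have "\<dots> \<le> (1 / r + 1) * (real n + 1 / \<delta> + 1)"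
    using \<open>r > 0\<close> \<open>\<delta> > 0\<close> by (simp add: field_simps)
  finally show "real (nat \<lceil>(real n + 1 / \<delta>) / r\<rceil>) \<le> (1 / r + 1) * (real n + 1 / \<delta> + 1) ^ 1"
    by simp
qed

theorem theorem5p1:
  fixes \<alpha> :: real
  assumes "\<alpha> \<ge> 1"
  shows "\<exists>(L :: nat \<Rightarrow> real \<Rightarrow> (bool list \<times> bool) list \<Rightarrow> (bool list \<Rightarrow> bool))
            (m :: nat \<Rightarrow> real \<Rightarrow> nat).
           poly_sample_size m \<and>
           (\<forall>n I D \<delta>. I \<subseteq> {..<n} \<longrightarrow> log_lipschitz \<alpha> n D \<longrightarrow> \<delta> > 0 \<longrightarrow>
              measure_pmf.prob (map_pmf (L n \<delta>) (labelled_samples D (parity I) (m n \<delta>)))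
                {h. \<forall>x\<in>cube n. h x = parity I x} \<ge> 1 - \<delta>)"
proof -
  define q where "q = \<alpha> / (1 + \<alpha>)"
  have q: "0 < q" "q < 1" using assms by (auto simp: q_def)
  define m where "m = (\<lambda>n \<delta>. nat \<lceil>(real n + 1 / \<delta>) / ln (1 / q)\<rceil>)"
  define L where "L = (\<lambda>n (\<delta>::real) S. parity (consistent_hypothesis parity (Pow {..<n}) S))"
  have "1 - \<delta> \<le> measure_pmf.prob (map_pmf (L n \<delta>) (labelled_samples D (parity I) (m n \<delta>)))
                   {h. \<forall>x\<in>cube n. h x = parity I x}"
    if I: "I \<subseteq> {..<n}" and D: "log_lipschitz \<alpha> n D" and "\<delta> > 0" for n I D \<delta>
  proof -
    have "measure_pmf.prob (iid_samples D (m n \<delta>))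
        {xs. consistent_hypothesis parity (Pow {..<n}) (map (\<lambda>x. (x, parity I x)) xs) \<noteq> I}
      \<le> 2 ^ n * q ^ m n \<delta>"
      unfolding q_def using assms by (intro log_lipschitz_prob_consistent_parity_wrong D I) simp
    also have "\<dots> \<le> \<delta>"
      using q \<open>\<delta> > 0\<close> by (intro two_power_mul_power_le) (simp_all add: m_def)
    finally show ?thesis
      unfolding L_def using prob_consistent_learner_exact_ge[where h = parity and K = "Pow {..<n}"
          and i = I and D = D and M = "m n \<delta>" and A = "cube n"] by linarith
  qed
  moreover have "poly_sample_size m"
    unfolding m_def using q by (intro poly_sample_size_ceiling) simp
  ultimately show ?thesis
    by (intro exI[of _ L] exI[of _ m]) blast
qed

end
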